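(* Let $N\ge2$, $s\in(0,1)$, $\beta\in(0,1]$, and let $\mathcal K_s$ be a kernel as described in the context. Let $E\subset\mathbb{R}^N$ be an open set with $\partial E$ of class $C^{1,\beta}$, $0\in\partial E$, and suppose there is $r>0$ such that $$E\cap Q_r=\{(y',y_N)\in B^{N-1}_r\times(-r,r):\ y_N>\gamma(y')\},$$ where $Q_r=B^{N-1}_r\times(-r,r)$, $B^{N-1}_r$ is the ball of radius $r$ centred at $0$ in $\mathbb{R}^{N-1}$, and $\gamma\in C^{1,\beta}(B^{N-1}_r)$ satisfies $|\gamma(y')|\le C_\gamma|y'|^{1+\beta}$. Define $$w(z,t)=\int_{\mathbb{R}^N}\mathcal K_s(z-y,t)\tau_E(y)\,dy,\qquad \tau_E=\mathbb 1_E-\mathbb 1_{\mathbb{R}^N\setminus\overline E}.$$ Then there exist $t_0>0$ and $C>0$, depending only on $N,s,\beta$ and $E$, such that for all $t\in(0,t_0)$ and all $z\in B_{t^{1/(2s)}}$ (the ball of radius $t^{1/(2s)}$ centred at $0$ in $\mathbb{R}^N$), $$\frac{\partial w}{\partial z_N}(z,t)\ge C\,t^{-\frac1{2s}}.$$ Consequently, for all $t\in(0,t_0)$, the set $\{z\in\mathbb{R}^N: w(z,t)=0\}\cap B_{t^{1/(2s)}}$ is of class $C^1$.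
   Context: Kernel: $\mathcal K_s(x,t)=t^{-\frac{N}{2s}}P_s(t^{-\frac1{2s}}x)$ for $x\in\mathbb{R}^N$, $t>0$, where $P_s\in C^1(\mathbb{R}^N)$ is radially symmetric, and there are constants $\mathcal C_{N,s}>0$, $C_{N,s}>0$ with $$\frac{\mathcal C_{N,s}^{-1}}{1+|y|^{N+2s}}\le P_s(y)\le\frac{\mathcal C_{N,s}}{1+|y|^{N+2s}},\qquad |\nabla P_s(y)|\le\frac{\mathcal C_{N,s}}{1+|y|^{N+2s+1}}\quad(y\in\mathbb{R}^N),$$ and $\lim_{t\to0}t^{-1}\mathcal K_s(y,t)=\frac{C_{N,s}}{|y|^{N+2s}}$ locally uniformly in $\mathbb{R}^N\setminus\{0\}$. *)

theory Defs
  imports "HOL-Analysis.Analysis"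
begin

(* R^N is represented as (real^'m::finite) \<times> real, i.e. points (y', y_N) with y' \<in> R^(N-1),
   N - 1 = CARD('m) \<ge> 1, so N \<ge> 2. *)

definition kern :: "real \<Rightarrow> ((real^'m::finite) \<times> real \<Rightarrow> real) \<Rightarrow> (real^'m::finite) \<times> real \<Rightarrow> real \<Rightarrow> real" where
  "kern s P x t = t powr (- real (CARD('m) + 1) / (2 * s)) * P (t powr (-1/(2 * s)) *\<^sub>R x)"

definition kernel_profile :: "real \<Rightarrow> ((real^'m::finite) \<times> real \<Rightarrow> real) \<Rightarrow> real \<Rightarrow> real \<Rightarrow> bool" where
  "kernel_profile s P Cc C \<longleftrightarrow>
     Cc > 0 \<and> C > 0 \<and>
     (\<forall>x y. norm x = norm y \<longrightarrow> P x = P y) \<and>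
     (\<exists>DP. (\<forall>y. (P has_derivative (\<lambda>h. DP y \<bullet> h)) (at y)) \<and> continuous_on UNIV DP \<and>
        (\<forall>y. norm (DP y) \<le> Cc / (1 + norm y powr (real (CARD('m) + 1) + 2 * s + 1)))) \<and>
     (\<forall>y. (1/Cc) / (1 + norm y powr (real (CARD('m) + 1) + 2 * s)) \<le> P y \<and>
          P y \<le> Cc / (1 + norm y powr (real (CARD('m) + 1) + 2 * s))) \<and>
     (\<forall>K. compact K \<and> 0 \<notin> K \<longrightarrow>
        uniform_limit K (\<lambda>t y. kern s P y t / t)
          (\<lambda>y. C / norm y powr (real (CARD('m) + 1) + 2 * s)) (at_right 0))"

definition C1beta_ball :: "real \<Rightarrow> real \<Rightarrow> ((real^'m::finite) \<Rightarrow> real) \<Rightarrow> bool" where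
  "C1beta_ball r \<beta> \<gamma> \<longleftrightarrow>
     (\<exists>D L. (\<forall>a\<in>ball 0 r. (\<gamma> has_derivative (\<lambda>h. D a \<bullet> h)) (at a)) \<and>
            (\<forall>a\<in>ball 0 r. \<forall>b\<in>ball 0 r. norm (D a - D b) \<le> L * norm (a - b) powr \<beta>))"

definition cyl :: "real \<Rightarrow> ((real^'m::finite) \<times> real) set" where
  "cyl r = {(y', yN). norm y' < r \<and> \<bar>yN\<bar> < r}"

definition C1beta_boundary :: "real \<Rightarrow> ((real^'m::finite) \<times> real) set \<Rightarrow> bool" where
  "C1beta_boundary \<beta> E \<longleftrightarrow>
     (\<forall>x0\<in>frontier E. \<exists>(R :: (real^'m) \<times> real \<Rightarrow> (real^'m) \<times> real) r \<gamma>. orthogonal_transformation R \<and> r > 0 \<and> C1beta_ball r \<beta> \<gamma> \<and>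
        (\<lambda>y. R (y - x0)) ` E \<inter> cyl r = {(y', yN). (y', yN) \<in> cyl r \<and> yN > \<gamma> y'})"

definition tauE :: "((real^'m::finite) \<times> real) set \<Rightarrow> (real^'m::finite) \<times> real \<Rightarrow> real" where
  "tauE E y = indicator E y - indicator (- closure E) y"

definition heat_w :: "real \<Rightarrow> ((real^'m::finite) \<times> real \<Rightarrow> real) \<Rightarrow> ((real^'m::finite) \<times> real) set
                      \<Rightarrow> (real^'m::finite) \<times> real \<Rightarrow> real \<Rightarrow> real" where
  "heat_w s P E z t = (\<integral>y. kern s P (z - y) t * tauE E y \<partial>lborel)"

definition C1_graph_set :: "((real^'m::finite) \<times> real) set \<Rightarrow> bool" where
  "C1_graph_set Z \<longleftrightarrow>
     (\<exists>U g D. open U \<and> (\<forall>x\<in>U. (g has_derivative (\<lambda>h. D x \<bullet> h)) (at x)) \<and>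
        continuous_on U D \<and> Z = (\<lambda>x. (x, g x)) ` U)"

end

theory Submission
  imports Defs
begin

(*
  Put a = t^(-1/(2s)).  The substitution y = u/a turns w(., t) into z |-> (P * tau_a)(a z),
  where tau_a(u) = tau_E(u/a) is the tau-function of the dilated set aE, so that
  dw/dz_N (z, t) = a * d(P * tau_a)/du_N (a z).

  For the sign function sigma(u) = sign u_N of the half-space, an upward shift by h raises
  sigma by 2 on a slab of thickness h next to the origin, where P is bounded below; hence
  d(P * sigma)/du_N >= c > 0 on the unit ball.  As gamma(y') = O(|y'|^(1+beta)), tau_a
  agrees with sigma outside a cusp around {u_N = 0} that shrinks like a^(-beta) and outside
  the ball of radius a r; the mass of this exceptional set under an integrable majorant of
  |grad P| tends to 0, so d(P * tau_a)/du_N >= c/2 on the unit ball for large a.  The zero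
  set is then a C^1 graph by the implicit function theorem.

  Only the graph description of E near 0, the continuity and the (1+beta)-order vanishing of
  gamma, and the pointwise bounds on P and grad P are needed.
*)

lemma nn_integral_lborel_affine:
  fixes f :: "'a::euclidean_space \<Rightarrow> ennreal" and c :: real
  assumes [measurable]: "f \<in> borel_measurable borel" and c: "c \<noteq> 0"
  shows "(\<integral>\<^sup>+x. f x \<partial>lborel) = ennreal (\<bar>c\<bar> ^ DIM('a)) * (\<integral>\<^sup>+x. f (t + c *\<^sub>R x) \<partial>lborel)"
  by (subst lborel_affine[OF c, of t])
     (simp add: nn_integral_density nn_integral_distr nn_integral_cmult)

lemma lborel_integrable_affine:
  fixes f :: "'a::euclidean_space \<Rightarrow> 'b::{banach, second_countable_topology}"
  assumes f: "integrable lborel f" and c: "c \<noteq> 0"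
  shows "integrable lborel (\<lambda>x. f (t + c *\<^sub>R x))"
  using f f[THEN borel_measurable_integrable] unfolding integrable_iff_bounded
  by (subst (asm) nn_integral_lborel_affine[where c=c and t=t])
     (auto simp: ennreal_mult_less_top c)

lemma lborel_integrable_affine_iff:
  fixes f :: "'a::euclidean_space \<Rightarrow> 'b::{banach, second_countable_topology}"
  assumes c: "c \<noteq> 0"
  shows "integrable lborel (\<lambda>x. f (t + c *\<^sub>R x)) \<longleftrightarrow> integrable lborel f"
  using lborel_integrable_affine[of f c t]
    lborel_integrable_affine[of "\<lambda>x. f (t + c *\<^sub>R x)" "1/c" "- t /\<^sub>R c"] c
  by (auto simp: algebra_simps)

lemma lborel_integral_affine:
  fixes f :: "'a::euclidean_space \<Rightarrow> 'b::{banach, second_countable_topology}" and c :: real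
  assumes c: "c \<noteq> 0"
  shows "(\<integral>x. f x \<partial>lborel) = \<bar>c\<bar> ^ DIM('a) *\<^sub>R (\<integral>x. f (t + c *\<^sub>R x) \<partial>lborel)"
proof cases
  assume f[measurable]: "integrable lborel f"
  then show ?thesis
    using c f[THEN borel_measurable_integrable] lborel_integrable_affine[OF f c, of t]
    by (subst lborel_affine[OF c, of t]) (simp add: integral_density integral_distr)
qed (simp add: lborel_integrable_affine_iff[OF c] not_integrable_integral_eq)

lemma emeasure_lborel_cube:
  assumes "0 \<le> \<rho>"
  shows "emeasure lborel (cbox (- (\<rho> *\<^sub>R One)) (\<rho> *\<^sub>R One :: 'a::euclidean_space))
           = ennreal ((2 * \<rho>) ^ DIM('a))"
proof -
  have "(\<Prod>b\<in>Basis. (\<rho> *\<^sub>R One - - (\<rho> *\<^sub>R One :: 'a)) \<bullet> b) = (\<Prod>b\<in>(Basis :: 'a set). 2 * \<rho>)"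
    by (rule prod.cong) (simp_all add: inner_add_left inner_sum_Basis)
  then show ?thesis
    using assms by (simp add: emeasure_lborel_cbox_eq)
qed

lemma norm_le_imp_in_cube:
  fixes x :: "'a::euclidean_space"
  assumes "norm x \<le> \<rho>"
  shows "x \<in> cbox (- (\<rho> *\<^sub>R One)) (\<rho> *\<^sub>R One)"
  using assms Basis_le_norm[of _ x] by (force simp: mem_box abs_le_iff)

lemma emeasure_lborel_cube_times_interval:
  assumes "0 \<le> \<rho>" "a \<le> b"
  shows "emeasure lborel (cbox (- (\<rho> *\<^sub>R One)) (\<rho> *\<^sub>R One :: 'a::euclidean_space) \<times> {a<..<b})
           = ennreal ((2 * \<rho>) ^ DIM('a) * (b - a))"
proof -
  have "emeasure lborel (cbox (- (\<rho> *\<^sub>R One)) (\<rho> *\<^sub>R One :: 'a) \<times> {a<..<b})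
      = emeasure lborel (cbox (- (\<rho> *\<^sub>R One)) (\<rho> *\<^sub>R One :: 'a)) * emeasure lborel {a<..<b}"
    unfolding lborel_prod[symmetric]
    by (intro sigma_finite_measure.emeasure_pair_measure_Times) (auto intro: sigma_finite_lborel)
  also have "\<dots> = ennreal ((2 * \<rho>) ^ DIM('a)) * ennreal (b - a)"
    using assms by (simp only: emeasure_lborel_cube emeasure_lborel_Ioo)
  finally show ?thesis
    using assms by (simp add: ennreal_mult)
qed

lemma dyadic_shell:
  fixes R x :: real
  assumes "0 < R" "R \<le> x"
  obtains k :: nat where "R * 2 ^ k \<le> x" "x < R * 2 ^ Suc k"
proof
  define k where "k = nat \<lfloor>log 2 (x / R)\<rfloor>"
  have x1: "1 \<le> x / R" using assms by simp
  then have k: "real k = of_int \<lfloor>log 2 (x / R)\<rfloor>" by (simp add: k_def)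
  have "(2::real) ^ k = 2 powr real k" by (simp add: powr_realpow)
  also have "\<dots> \<le> 2 powr log 2 (x / R)" unfolding k by (intro powr_mono) auto
  also have "\<dots> = x / R" using x1 by simp
  finally show "R * 2 ^ k \<le> x" using assms by (simp add: field_simps)
  have "x / R = 2 powr log 2 (x / R)" using x1 by simp
  also have "\<dots> < 2 powr (real k + 1)" unfolding k by (intro powr_less_mono) linarith+
  also have "\<dots> = 2 ^ Suc k" by (simp add: powr_realpow[symmetric] powr_add)
  finally show "x < R * 2 ^ Suc k" using assms by (simp add: field_simps)
qed

lemma integrable_power_decay:
  fixes f :: "'a::euclidean_space \<Rightarrow> real"
  assumes [measurable]: "f \<in> borel_measurable borel"
    and f0: "\<And>x. 0 \<le> f x" and fC: "\<And>x. f x \<le> C"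
    and decay: "\<And>x. R \<le> norm x \<Longrightarrow> f x \<le> C * norm x powr (- p)"
    and R: "R > 0" and p: "p > DIM('a)"
  shows "integrable lborel f"
proof -
  define cube :: "real \<Rightarrow> 'a set" where "cube \<rho> = cbox (- (\<rho> *\<^sub>R One)) (\<rho> *\<^sub>R One)" for \<rho>
  define c where "c k = C * (R * 2 ^ k) powr (- p)" for k :: nat
  define \<rho> where "\<rho> k = R * 2 ^ Suc k" for k :: nat
  have C0: "C \<ge> 0" using f0[of 0] fC[of 0] by linarith
  have c0: "c k \<ge> 0" for k using C0 by (simp add: c_def)
  have cube_measure: "emeasure lborel (cube r) = ennreal ((2 * r) ^ DIM('a))" if "0 \<le> r" for r
    unfolding cube_def using that by (rule emeasure_lborel_cube)
  have shell: "ennreal (f x) \<le> ennreal (c k) * indicator (cube (\<rho> k)) x"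
    if "R * 2 ^ k \<le> norm x" "norm x < \<rho> k" for x k
  proof -
    have "R \<le> R * 2 ^ k" using R by simp
    then have "f x \<le> C * norm x powr (- p)" using decay that(1) by (meson order_trans)
    also have "\<dots> \<le> c k"
      unfolding c_def using that R p C0 by (intro mult_left_mono powr_mono2') auto
    finally show ?thesis
      using that norm_le_imp_in_cube[of x "\<rho> k"] by (simp add: cube_def ennreal_leI)
  qed
  have pointwise: "ennreal (f x) \<le> ennreal C * indicator (cube R) x
      + (\<Sum>k. ennreal (c k) * indicator (cube (\<rho> k)) x)" for x
  proof (cases "norm x < R")
    case True
    then show ?thesis
      using fC[of x] norm_le_imp_in_cube[of x R]
      by (simp add: cube_def ennreal_leI add_increasing2)
  next
    case False
    then obtain k where lo: "R * 2 ^ k \<le> norm x" and hi: "norm x < \<rho> k"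
      using dyadic_shell[OF R, of "norm x"] by (auto simp: \<rho>_def)
    have "ennreal (f x) \<le> ennreal (c k) * indicator (cube (\<rho> k)) x" by (rule shell[OF lo hi])
    also have "\<dots> = (\<Sum>j\<in>{k}. ennreal (c j) * indicator (cube (\<rho> j)) x)"
      by (simp only: sum.insert[of "{}" k] finite.emptyI empty_iff sum.empty add_0_right not_False_eq_True)
    also have "\<dots> \<le> (\<Sum>j. ennreal (c j) * indicator (cube (\<rho> j)) x)"
      by (intro sum_le_suminf) auto
    finally show ?thesis by (simp add: add_increasing)
  qed
  have geometric: "c k * (2 * \<rho> k) ^ DIM('a)
      = C * 4 ^ DIM('a) * R powr (DIM('a) - p) * (2 powr (DIM('a) - p)) ^ k" for k
  proof -
    have scale: "X powr (- p) * (4 * X) ^ n = 4 ^ n * X powr (real n - p)" if "X > 0" for X :: real and n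
      using that by (simp add: power_mult_distrib powr_diff powr_realpow powr_minus_divide)
    have "c k * (2 * \<rho> k) ^ DIM('a) = C * ((R * 2 ^ k) powr (- p) * (4 * (R * 2 ^ k)) ^ DIM('a))"
      by (simp add: c_def \<rho>_def mult_ac)
    also have "\<dots> = C * 4 ^ DIM('a) * (R * 2 ^ k) powr (DIM('a) - p)"
      using scale[of "R * 2 ^ k"] R by simp
    also have "(R * 2 ^ k) powr (DIM('a) - p) = R powr (DIM('a) - p) * (2 powr (DIM('a) - p)) ^ k"
      using R by (simp add: powr_mult powr_realpow[symmetric] powr_powr mult.commute)
    finally show ?thesis by (simp add: mult_ac)
  qed
  have summable: "summable (\<lambda>k. c k * (2 * \<rho> k) ^ DIM('a))"
    unfolding geometric using p by (intro summable_mult summable_geometric) (auto simp: powr_less_one)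
  have "(\<integral>\<^sup>+x. ennreal (norm (f x)) \<partial>lborel)
      \<le> (\<integral>\<^sup>+x. ennreal C * indicator (cube R) x + (\<Sum>k. ennreal (c k) * indicator (cube (\<rho> k)) x) \<partial>lborel)"
    using pointwise f0 by (intro nn_integral_mono) simp
  also have "\<dots> = ennreal C * emeasure lborel (cube R) + (\<Sum>k. ennreal (c k) * emeasure lborel (cube (\<rho> k)))"
    by (simp add: nn_integral_add nn_integral_suminf nn_integral_cmult_indicator cube_def)
  also have "\<dots> = ennreal (C * (2 * R) ^ DIM('a)) + (\<Sum>k. ennreal (c k * (2 * \<rho> k) ^ DIM('a)))"
    using R C0 c0 by (simp add: cube_measure \<rho>_def ennreal_mult)
  also have "(\<Sum>k. ennreal (c k * (2 * \<rho> k) ^ DIM('a))) = ennreal (\<Sum>k. c k * (2 * \<rho> k) ^ DIM('a))"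
    using summable c0 R by (intro suminf_ennreal2) (auto simp: \<rho>_def)
  finally show ?thesis by (simp add: integrable_iff_bounded le_less_trans ennreal_add_less_top)
qed

lemma integral_dominated_convergence_at:
  fixes s :: "'c::first_countable_topology \<Rightarrow> 'a \<Rightarrow> 'b::{banach, second_countable_topology}"
  assumes "f \<in> borel_measurable M" "\<And>x. s x \<in> borel_measurable M" "integrable M w"
    and lim: "AE y in M. ((\<lambda>x. s x y) \<longlongrightarrow> f y) (at x0)"
    and bound: "\<forall>\<^sub>F x in at x0. AE y in M. norm (s x y) \<le> w y"
  shows "((\<lambda>x. integral\<^sup>L M (s x)) \<longlongrightarrow> integral\<^sup>L M f) (at x0)"
  unfolding tendsto_at_iff_sequentially comp_def
proof (intro allI impI)
  fix X assume "\<forall>i. X i \<in> UNIV - {x0}" "X \<longlonglongrightarrow> x0"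
  then have X: "filterlim X (at x0) sequentially" by (simp add: filterlim_at)
  from filterlim_iff[THEN iffD1, OF X, rule_format, OF bound]
  obtain N where w: "\<And>n. N \<le> n \<Longrightarrow> AE y in M. norm (s (X n) y) \<le> w y"
    by (auto simp: eventually_sequentially)
  show "(\<lambda>n. integral\<^sup>L M (s (X n))) \<longlonglongrightarrow> integral\<^sup>L M f"
  proof (rule LIMSEQ_offset, rule integral_dominated_convergence)
    show "AE y in M. norm (s (X (n + N)) y) \<le> w y" for n
      by (rule w) auto
    show "AE y in M. (\<lambda>n. s (X (n + N)) y) \<longlonglongrightarrow> f y"
      using lim
    proof eventually_elim
      fix y assume "((\<lambda>x. s x y) \<longlongrightarrow> f y) (at x0)"
      then show "(\<lambda>n. s (X (n + N)) y) \<longlonglongrightarrow> f y"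
        by (intro LIMSEQ_ignore_initial_segment filterlim_compose[OF _ X])
    qed
  qed (use assms in auto)
qed

definition convol :: "('a::euclidean_space \<Rightarrow> real) \<Rightarrow> ('a \<Rightarrow> real) \<Rightarrow> 'a \<Rightarrow> real" where
  "convol K g z = (\<integral>y. K (z - y) * g y \<partial>lborel)"

definition convol_grad :: "('a::euclidean_space \<Rightarrow> 'a) \<Rightarrow> ('a \<Rightarrow> real) \<Rightarrow> 'a \<Rightarrow> 'a" where
  "convol_grad DK g z = (\<integral>y. g y *\<^sub>R DK (z - y) \<partial>lborel)"

lemma integrable_convol:
  fixes K g :: "'a::euclidean_space \<Rightarrow> real"
  assumes K: "integrable lborel K" and [measurable]: "g \<in> borel_measurable borel"
    and g: "\<And>y. \<bar>g y\<bar> \<le> M"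
  shows "integrable lborel (\<lambda>y. K (z - y) * g y)"
proof -
  have [measurable]: "K \<in> borel_measurable borel"
    using K by (simp add: borel_measurable_integrable)
  show ?thesis
  proof (rule Bochner_Integration.integrable_bound)
    show "integrable lborel (\<lambda>y. M * K (z - y))"
      using lborel_integrable_affine[OF K, of "-1" z] by simp
    show "AE y in lborel. norm (K (z - y) * g y) \<le> norm (M * K (z - y))"
      using g order_trans[OF abs_ge_zero g]
      by (intro AE_I2) (auto simp: abs_mult mult.commute intro!: mult_right_mono)
  qed measurable
qed

lemma integrable_convol_grad:
  fixes DK :: "'a::euclidean_space \<Rightarrow> 'a" and g H :: "'a \<Rightarrow> real"
  assumes [measurable]: "DK \<in> borel_measurable borel" "g \<in> borel_measurable borel"
    and g: "\<And>y. \<bar>g y\<bar> \<le> M" and H: "integrable lborel H"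
    and dom: "\<And>y. norm (DK (z - y)) \<le> H y"
  shows "integrable lborel (\<lambda>y. g y *\<^sub>R DK (z - y))"
proof (rule Bochner_Integration.integrable_bound)
  show "integrable lborel (\<lambda>y. M * H y)" using H by simp
  show "AE y in lborel. norm (g y *\<^sub>R DK (z - y)) \<le> norm (M * H y)"
  proof (intro AE_I2)
    fix y
    have "norm (g y *\<^sub>R DK (z - y)) \<le> M * H y"
      using g dom order_trans[OF abs_ge_zero g] by (auto intro!: mult_mono)
    then show "norm (g y *\<^sub>R DK (z - y)) \<le> norm (M * H y)" by simp
  qed
qed measurable

lemma isCont_convol_grad:
  fixes DK :: "'a::euclidean_space \<Rightarrow> 'a" and g H :: "'a \<Rightarrow> real"
  assumes DK: "continuous_on UNIV DK" and [measurable]: "g \<in> borel_measurable borel"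
    and g: "\<And>y. \<bar>g y\<bar> \<le> M" and H: "integrable lborel H" and \<delta>: "\<delta> > 0"
    and dom: "\<And>\<zeta> y. \<zeta> \<in> ball z0 \<delta> \<Longrightarrow> norm (DK (\<zeta> - y)) \<le> H y"
  shows "isCont (convol_grad DK g) z0"
proof -
  have [measurable]: "DK \<in> borel_measurable borel" using DK by (rule borel_measurable_continuous_onI)
  have "((\<lambda>\<zeta>. \<integral>y. g y *\<^sub>R DK (\<zeta> - y) \<partial>lborel) \<longlongrightarrow> (\<integral>y. g y *\<^sub>R DK (z0 - y) \<partial>lborel)) (at z0)"
  proof (rule integral_dominated_convergence_at[where w="\<lambda>y. M * H y"])
    show "integrable lborel (\<lambda>y. M * H y)" using H by simp
    show "AE y in lborel. ((\<lambda>\<zeta>. g y *\<^sub>R DK (\<zeta> - y)) \<longlongrightarrow> g y *\<^sub>R DK (z0 - y)) (at z0)"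
    proof (intro AE_I2 tendsto_scaleR tendsto_const)
      fix y
      have "isCont DK (z0 - y)" using DK by (simp add: continuous_on_eq_continuous_at)
      then show "((\<lambda>\<zeta>. DK (\<zeta> - y)) \<longlongrightarrow> DK (z0 - y)) (at z0)"
        by (rule isCont_tendsto_compose) (intro tendsto_diff tendsto_ident_at tendsto_const)
    qed
    have "\<forall>\<^sub>F \<zeta> in at z0. \<zeta> \<in> ball z0 \<delta>"
      using \<delta> by (intro eventually_at_in_open') auto
    then show "\<forall>\<^sub>F \<zeta> in at z0. AE y in lborel. norm (g y *\<^sub>R DK (\<zeta> - y)) \<le> M * H y"
    proof eventually_elim
      case (elim \<zeta>)
      show ?case
        using g dom[OF elim] order_trans[OF abs_ge_zero g] by (intro AE_I2) (auto intro!: mult_mono)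
    qed
  qed measurable
  then show ?thesis by (simp add: isCont_def convol_grad_def[abs_def])
qed

lemma kernel_linearization_error:
  fixes K :: "'a::euclidean_space \<Rightarrow> real" and DK :: "'a \<Rightarrow> 'a"
  assumes dK: "\<And>x. (K has_derivative (\<lambda>h. DK x \<bullet> h)) (at x)"
    and dom: "\<And>\<zeta> y. \<zeta> \<in> ball z0 \<delta> \<Longrightarrow> norm (DK (\<zeta> - y)) \<le> H y"
    and \<zeta>: "\<zeta> \<in> ball z0 \<delta>"
  shows "\<bar>(K (\<zeta> - y) - K (z0 - y)) - DK (z0 - y) \<bullet> (\<zeta> - z0)\<bar> \<le> 2 * H y * norm (\<zeta> - z0)"
proof -
  have z0: "z0 \<in> ball z0 \<delta>" using \<zeta> le_less_trans[OF zero_le_dist] by auto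
  have "norm ((\<lambda>\<zeta>. K (\<zeta> - y)) \<zeta> - (\<lambda>\<zeta>. K (\<zeta> - y)) z0) \<le> H y * norm (\<zeta> - z0)"
  proof (rule differentiable_bound[where f'="\<lambda>\<zeta> h. DK (\<zeta> - y) \<bullet> h"])
    show "((\<lambda>\<zeta>. K (\<zeta> - y)) has_derivative (\<lambda>h. DK (\<zeta> - y) \<bullet> h)) (at \<zeta> within ball z0 \<delta>)" for \<zeta>
    proof -
      have "((\<lambda>\<zeta>. \<zeta> - y) has_derivative (\<lambda>h. h)) (at \<zeta>)"
        by (auto intro!: derivative_eq_intros)
      from has_derivative_compose[OF this dK]
      show ?thesis by (auto intro: has_derivative_at_withinI simp: o_def)
    qed
    show "onorm (\<lambda>h. DK (\<zeta> - y) \<bullet> h) \<le> H y" if "\<zeta> \<in> ball z0 \<delta>" for \<zeta>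
    proof (rule onorm_le)
      fix h
      have "norm (DK (\<zeta> - y) \<bullet> h) \<le> norm (DK (\<zeta> - y)) * norm h"
        by (simp add: Cauchy_Schwarz_ineq2)
      also have "\<dots> \<le> H y * norm h" using dom[OF that] by (intro mult_right_mono) auto
      finally show "norm (DK (\<zeta> - y) \<bullet> h) \<le> H y * norm h" .
    qed
  qed (use \<zeta> z0 in auto)
  moreover have "\<bar>DK (z0 - y) \<bullet> (\<zeta> - z0)\<bar> \<le> H y * norm (\<zeta> - z0)"
    using Cauchy_Schwarz_ineq2[of "DK (z0 - y)" "\<zeta> - z0"] mult_right_mono[OF dom[OF z0, of y] norm_ge_zero[of "\<zeta> - z0"]]
    by linarith
  ultimately show ?thesis by simp
qed

lemma has_derivative_convol:
  fixes K g H :: "'a::euclidean_space \<Rightarrow> real" and DK :: "'a \<Rightarrow> 'a"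
  assumes dK: "\<And>x. (K has_derivative (\<lambda>h. DK x \<bullet> h)) (at x)"
    and DK_meas[measurable]: "DK \<in> borel_measurable borel"
    and g_meas[measurable]: "g \<in> borel_measurable borel"
    and K: "integrable lborel K" and g: "\<And>y. \<bar>g y\<bar> \<le> M"
    and H: "integrable lborel H" and \<delta>: "\<delta> > 0"
    and dom: "\<And>\<zeta> y. \<zeta> \<in> ball z0 \<delta> \<Longrightarrow> norm (DK (\<zeta> - y)) \<le> H y"
  shows "(convol K g has_derivative (\<lambda>h. convol_grad DK g z0 \<bullet> h)) (at z0)"
proof -
  have [measurable]: "K \<in> borel_measurable borel"
    using K by (simp add: borel_measurable_integrable)
  have M: "0 \<le> M" using order_trans[OF abs_ge_zero g] .
  have z0: "z0 \<in> ball z0 \<delta>" using \<delta> by simp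
  have H0: "0 \<le> H y" for y using dom[OF z0, of y] norm_ge_zero order_trans by blast
  define R where "R \<zeta> y = ((K (\<zeta> - y) - K (z0 - y)) - DK (z0 - y) \<bullet> (\<zeta> - z0)) * g y / norm (\<zeta> - z0)"
    for \<zeta> y
  have remainder: "((convol K g \<zeta> - convol K g z0) - convol_grad DK g z0 \<bullet> (\<zeta> - z0)) /\<^sub>R norm (\<zeta> - z0)
      = (\<integral>y. R \<zeta> y \<partial>lborel)" for \<zeta>
  proof -
    have grad: "integrable lborel (\<lambda>y. g y *\<^sub>R DK (z0 - y))"
      using integrable_convol_grad[OF DK_meas g_meas g H dom[OF z0]] .
    have lin: "integrable lborel (\<lambda>y. DK (z0 - y) \<bullet> (\<zeta> - z0) * g y)"
      using integrable_inner_left[OF grad, of "\<zeta> - z0"] by (simp add: mult.commute)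
    have conv: "integrable lborel (\<lambda>y. K (z - y) * g y)" for z
      using integrable_convol[OF K g_meas g] .
    have "(\<integral>y. R \<zeta> y \<partial>lborel) = (\<integral>y. K (\<zeta> - y) * g y - K (z0 - y) * g y
        - DK (z0 - y) \<bullet> (\<zeta> - z0) * g y \<partial>lborel) / norm (\<zeta> - z0)"
      by (simp add: R_def left_diff_distrib)
    also have "\<dots> = ((convol K g \<zeta> - convol K g z0)
        - (\<integral>y. DK (z0 - y) \<bullet> (\<zeta> - z0) * g y \<partial>lborel)) / norm (\<zeta> - z0)"
      using conv lin by (simp add: convol_def)
    also have "(\<integral>y. DK (z0 - y) \<bullet> (\<zeta> - z0) * g y \<partial>lborel) = convol_grad DK g z0 \<bullet> (\<zeta> - z0)"
      unfolding convol_grad_def using grad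
      by (subst integral_inner_left[symmetric]) (auto simp: mult.commute)
    finally show ?thesis by (simp add: divide_inverse mult.commute)
  qed
  have "((\<lambda>\<zeta>. \<integral>y. R \<zeta> y \<partial>lborel) \<longlongrightarrow> (\<integral>y. 0 \<partial>(lborel :: 'a measure))) (at z0)"
  proof (rule integral_dominated_convergence_at[where w="\<lambda>y. 2 * M * H y"])
    show "integrable lborel (\<lambda>y. 2 * M * H y)" using H by simp
    show "AE y in lborel. ((\<lambda>\<zeta>. R \<zeta> y) \<longlongrightarrow> 0) (at z0)"
    proof (intro AE_I2)
      fix y
      have "((\<lambda>u. ((K u - K (z0 - y)) - DK (z0 - y) \<bullet> (u - (z0 - y))) /\<^sub>R norm (u - (z0 - y)))
          \<longlongrightarrow> 0) (at (z0 - y))"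
        using dK[of "z0 - y"] unfolding has_derivative_at_within by simp
      from LIM_offset[OF this, of "- y"]
      have "((\<lambda>\<zeta>. ((K (\<zeta> - y) - K (z0 - y)) - DK (z0 - y) \<bullet> (\<zeta> - z0)) / norm (\<zeta> - z0)) \<longlongrightarrow> 0) (at z0)"
        by (simp add: divide_inverse mult.commute)
      from tendsto_mult_left_zero[OF this, of "g y"]
      show "((\<lambda>\<zeta>. R \<zeta> y) \<longlongrightarrow> 0) (at z0)"
        by (simp add: R_def mult_ac divide_inverse)
    qed
    have "\<forall>\<^sub>F \<zeta> in at z0. \<zeta> \<in> ball z0 \<delta>"
      using \<delta> by (intro eventually_at_in_open') auto
    then show "\<forall>\<^sub>F \<zeta> in at z0. AE y in lborel. norm (R \<zeta> y) \<le> 2 * M * H y"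
    proof eventually_elim
      case (elim \<zeta>)
      show ?case
      proof (intro AE_I2)
        fix y
        note kernel_linearization_error[OF dK dom elim, of y]
        then have "\<bar>(K (\<zeta> - y) - K (z0 - y)) - DK (z0 - y) \<bullet> (\<zeta> - z0)\<bar> / norm (\<zeta> - z0) \<le> 2 * H y"
          by (cases "\<zeta> = z0") (auto simp: divide_le_eq H0)
        then have "\<bar>g y\<bar> * (\<bar>(K (\<zeta> - y) - K (z0 - y)) - DK (z0 - y) \<bullet> (\<zeta> - z0)\<bar> / norm (\<zeta> - z0))
            \<le> M * (2 * H y)"
          using g[of y] H0 by (intro mult_mono) auto
        then show "norm (R \<zeta> y) \<le> 2 * M * H y"
          by (simp add: R_def abs_mult mult_ac)
      qed
    qed
  qed (simp_all add: R_def)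
  then have "((\<lambda>\<zeta>. ((convol K g \<zeta> - convol K g z0) - convol_grad DK g z0 \<bullet> (\<zeta> - z0))
      /\<^sub>R norm (\<zeta> - z0)) \<longlongrightarrow> 0) (at z0)"
    unfolding remainder by simp
  then show ?thesis
    unfolding has_derivative_at_within using bounded_linear_inner_right by blast
qed

lemma has_real_derivative_vertical:
  fixes w :: "'a::real_inner \<times> real \<Rightarrow> real"
  assumes "(w has_derivative (\<lambda>v. F \<bullet> v)) (at (z + (0, h0)))"
  shows "((\<lambda>h. w (z + (0, h))) has_real_derivative snd F) (at h0)"
proof -
  have "((\<lambda>h. z + (0, h)) has_derivative (\<lambda>h. (0, h))) (at h0)"
    by (auto intro!: derivative_eq_intros)
  from has_derivative_compose[OF this assms]
  have "((\<lambda>h. w (z + (0, h))) has_derivative (\<lambda>h. F \<bullet> (0, h))) (at h0)" by (simp add: o_def)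
  moreover have "(\<lambda>h. F \<bullet> (0, h)) = (*) (snd F)"
    by (auto simp: inner_Pair_0)
  ultimately show ?thesis by (simp add: has_field_derivative_def)
qed

lemma vertical_strict_mono:
  fixes w :: "'a::real_inner \<times> real \<Rightarrow> real"
  assumes "convex B"
    and dw: "\<And>z. z \<in> B \<Longrightarrow> (w has_derivative (\<lambda>v. F z \<bullet> v)) (at z)"
    and pos: "\<And>z. z \<in> B \<Longrightarrow> snd (F z) > 0"
    and ab: "(x, a) \<in> B" "(x, b) \<in> B" "a < b"
  shows "w (x, a) < w (x, b)"
proof (rule DERIV_pos_imp_increasing[OF \<open>a < b\<close>])
  fix y assume y: "a \<le> y" "y \<le> b"
  define \<theta> where "\<theta> = (y - a) / (b - a)"
  have \<theta>: "0 \<le> \<theta>" "\<theta> \<le> 1" using y \<open>a < b\<close> by (auto simp: \<theta>_def field_simps)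
  have "(1 - \<theta>) *\<^sub>R (x, a) + \<theta> *\<^sub>R (x, b) = (x, y)"
    using \<open>a < b\<close> by (simp add: \<theta>_def algebra_simps) (simp add: field_simps)
  then have "(x, y) \<in> B"
    using convexD[OF \<open>convex B\<close> ab(1,2), of "1 - \<theta>" \<theta>] \<theta> by simp
  with has_real_derivative_vertical[of w "F (x, y)" "(x, 0)" y] dw pos
  show "\<exists>D. ((\<lambda>h. w (x, h)) has_real_derivative D) (at y) \<and> 0 < D"
    by auto
qed

lemma local_inverse_vertical:
  fixes w :: "'a::euclidean_space \<times> real \<Rightarrow> real"
  assumes "open B"
    and dw: "\<And>z. z \<in> B \<Longrightarrow> (w has_derivative (\<lambda>v. F z \<bullet> v)) (at z)"
    and cF: "continuous_on B F" and z0: "z0 \<in> B" and nz: "snd (F z0) \<noteq> 0"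
  obtains U V \<Psi> where "open U" "U \<subseteq> B" "z0 \<in> U" "open V" "(fst z0, w z0) \<in> V"
    "homeomorphism U V (\<lambda>z. (fst z, w z)) \<Psi>" "\<And>v. v \<in> V \<Longrightarrow> \<Psi> differentiable (at v)"
proof -
  define L where "L z v = (fst v, F z \<bullet> v)" for z v
  have bl: "bounded_linear (L z)" for z
    unfolding L_def by (intro bounded_linear_Pair bounded_linear_fst bounded_linear_inner_right)
  define \<Phi>' where "\<Phi>' z = Blinfun (L z)" for z
  have \<Phi>'_apply: "blinfun_apply (\<Phi>' z) = L z" for z
    unfolding \<Phi>'_def using bl by (rule bounded_linear_Blinfun_apply)
  have d\<Phi>: "((\<lambda>z. (fst z, w z)) has_derivative blinfun_apply (\<Phi>' z)) (at z)" if "z \<in> B" for z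
    unfolding \<Phi>'_apply L_def
    by (rule has_derivative_Pair) (auto intro!: derivative_eq_intros dw[OF that])
  have c\<Phi>': "continuous_on B \<Phi>'"
    unfolding continuous_on_iff
  proof (intro ballI allI impI)
    fix x e assume x: "x \<in> B" and e: "(0::real) < e"
    obtain d where d: "d > 0" "\<forall>x'\<in>B. dist x' x < d \<longrightarrow> dist (F x') (F x) < e"
      using cF x e unfolding continuous_on_iff by blast
    have "dist (\<Phi>' x') (\<Phi>' x) \<le> dist (F x') (F x)" for x'
      unfolding dist_norm
    proof (rule norm_blinfun_bound)
      fix v
      have "norm (blinfun_apply (\<Phi>' x' - \<Phi>' x) v) = \<bar>(F x' - F x) \<bullet> v\<bar>"
        by (simp add: blinfun.diff_left \<Phi>'_apply L_def inner_diff_left)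
      also have "\<dots> \<le> norm (F x' - F x) * norm v" by (rule Cauchy_Schwarz_ineq2)
      finally show "norm (blinfun_apply (\<Phi>' x' - \<Phi>' x) v) \<le> norm (F x' - F x) * norm v" .
    qed simp
    then show "\<exists>d>0. \<forall>x'\<in>B. dist x' x < d \<longrightarrow> dist (\<Phi>' x') (\<Phi>' x) < e"
      using d by (meson le_less_trans)
  qed
  \<comment> \<open>the inverse of \<open>(v', v\<^sub>N) \<mapsto> (v', a \<bullet> v' + b v\<^sub>N)\<close>, where \<open>F z0 = (a, b)\<close>\<close>
  define M where "M v = (fst v, (snd v - fst (F z0) \<bullet> fst v) / snd (F z0))" for v :: "'a \<times> real"
  have "bounded_linear (\<lambda>v::'a \<times> real. snd v - fst (F z0) \<bullet> fst v)"
    by (intro bounded_linear_sub bounded_linear_snd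
        bounded_linear_compose[OF bounded_linear_inner_right bounded_linear_fst])
  from bounded_linear_compose[OF bounded_linear_divide[of "snd (F z0)"] this]
  have "bounded_linear (\<lambda>v::'a \<times> real. (snd v - fst (F z0) \<bullet> fst v) / snd (F z0))"
    by simp
  then have blM: "bounded_linear M"
    unfolding M_def by (intro bounded_linear_Pair bounded_linear_fst)
  have inv: "Blinfun M o\<^sub>L \<Phi>' z0 = id_blinfun"
  proof (rule blinfun_eqI)
    fix v :: "'a \<times> real"
    show "blinfun_apply (Blinfun M o\<^sub>L \<Phi>' z0) v = blinfun_apply id_blinfun v"
      using nz by (cases v, cases "F z0")
        (simp add: bounded_linear_Blinfun_apply[OF blM] \<Phi>'_apply L_def M_def inner_Pair)
  qed
  show ?thesis
  proof (rule inverse_function_theorem[OF \<open>open B\<close> d\<Phi> c\<Phi>' z0 inv])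
    fix U V \<Psi> \<Psi>'
    assume "open U" "U \<subseteq> B" "z0 \<in> U" "open V" "(fst z0, w z0) \<in> V"
      "homeomorphism U V (\<lambda>z. (fst z, w z)) \<Psi>" "\<And>v. v \<in> V \<Longrightarrow> (\<Psi> has_derivative \<Psi>' v) (at v)"
    then show ?thesis
      using that[of U V \<Psi>] differentiableI by blast
  qed
qed

lemma implicit_function_gradient:
  fixes w :: "'a::euclidean_space \<times> real \<Rightarrow> real" and g :: "'a \<Rightarrow> real"
  assumes "g differentiable (at a)" and W: "open W" "a \<in> W"
    and zero: "\<And>x. x \<in> W \<Longrightarrow> w (x, g x) = 0"
    and dw: "(w has_derivative (\<lambda>v. F \<bullet> v)) (at (a, g a))" and nz: "snd F \<noteq> 0"
  shows "(g has_derivative (\<lambda>h. (- (1 / snd F) *\<^sub>R fst F) \<bullet> h)) (at a)"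
proof -
  obtain Lg where dg: "(g has_derivative Lg) (at a)"
    using assms(1) by (auto simp: differentiable_def)
  have "((\<lambda>x. (x, g x)) has_derivative (\<lambda>h. (h, Lg h))) (at a)"
    by (intro has_derivative_Pair has_derivative_ident dg)
  from has_derivative_compose[OF this dw]
  have "((\<lambda>x. w (x, g x)) has_derivative (\<lambda>h. F \<bullet> (h, Lg h))) (at a)" by (simp add: o_def)
  moreover have "((\<lambda>x. w (x, g x)) has_derivative (\<lambda>h. 0)) (at a)"
    by (rule has_derivative_transform_within_open[OF has_derivative_const W]) (simp add: zero)
  ultimately have "(\<lambda>h. F \<bullet> (h, Lg h)) = (\<lambda>h. 0)" by (rule has_derivative_unique)
  then have "fst F \<bullet> h + snd F * Lg h = 0" for h
    by (cases F) (metis inner_Pair fst_conv snd_conv inner_real_def)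
  then have "Lg = (\<lambda>h. (- (1 / snd F) *\<^sub>R fst F) \<bullet> h)"
    using nz by (intro ext) (simp add: field_simps eq_neg_iff_add_eq_0)
  with dg show ?thesis by simp
qed

lemma zero_set_local_graph:
  fixes w :: "'a::euclidean_space \<times> real \<Rightarrow> real"
  assumes "open B"
    and dw: "\<And>z. z \<in> B \<Longrightarrow> (w has_derivative (\<lambda>v. F z \<bullet> v)) (at z)"
    and cF: "continuous_on B F" and z0: "z0 \<in> B" "w z0 = 0" and nz: "snd (F z0) \<noteq> 0"
  obtains W G where "open W" "fst z0 \<in> W" "G differentiable (at (fst z0))"
    "\<And>x. x \<in> W \<Longrightarrow> (x, G x) \<in> B \<and> w (x, G x) = 0"
proof -
  obtain U V \<Psi> where "open U" and U: "U \<subseteq> B" and "z0 \<in> U" and V: "open V" "(fst z0, w z0) \<in> V"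
    and hom: "homeomorphism U V (\<lambda>z. (fst z, w z)) \<Psi>"
    and d\<Psi>: "\<And>v. v \<in> V \<Longrightarrow> \<Psi> differentiable (at v)"
    by (rule local_inverse_vertical[OF \<open>open B\<close> dw cF z0(1) nz]) (assumption, rule that)
  have V0: "(fst z0, 0) \<in> V" using V(2) z0(2) by simp
  define W where "W = (\<lambda>x. (x, 0::real)) -` V"
  have W: "open W" "fst z0 \<in> W"
    unfolding W_def using V0 by (auto intro!: continuous_open_vimage[OF V(1)] continuous_intros)
  have "(x, snd (\<Psi> (x, 0))) \<in> B \<and> w (x, snd (\<Psi> (x, 0))) = 0" if "x \<in> W" for x
  proof -
    have xV: "(x, 0) \<in> V" using that by (simp add: W_def)
    have "\<Psi> (x, 0) \<in> B" using hom xV U unfolding homeomorphism_def by blast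
    moreover have "(fst (\<Psi> (x, 0)), w (\<Psi> (x, 0))) = (x, 0)"
      using hom xV unfolding homeomorphism_def by blast
    ultimately show ?thesis by (metis fst_conv snd_conv prod.collapse)
  qed
  moreover obtain \<Psi>' where "(\<Psi> has_derivative \<Psi>') (at (fst z0, 0))"
    using d\<Psi>[OF V0] by (auto simp: differentiable_def)
  moreover have "((\<lambda>x. (x, 0::real)) has_derivative (\<lambda>h. (h, 0))) (at (fst z0))"
    by (auto intro!: derivative_eq_intros)
  ultimately show ?thesis
    using that[OF W, of "\<lambda>x. snd (\<Psi> (x, 0))"]
    by (metis (no_types) differentiableI has_derivative_compose has_derivative_snd)
qed

lemma C1_graph_set_zero_set:
  fixes w :: "(real^'m::finite) \<times> real \<Rightarrow> real" and F :: "(real^'m) \<times> real \<Rightarrow> (real^'m) \<times> real"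
  assumes B: "open B" "convex B"
    and dw: "\<And>z. z \<in> B \<Longrightarrow> (w has_derivative (\<lambda>v. F z \<bullet> v)) (at z)"
    and cF: "continuous_on B F"
    and pos: "\<And>z. z \<in> B \<Longrightarrow> snd (F z) > 0"
  shows "C1_graph_set ({z. w z = 0} \<inter> B)"
proof -
  define Z where "Z = {z. w z = 0} \<inter> B"
  have unique: "y1 = y2" if "(x, y1) \<in> Z" "(x, y2) \<in> Z" for x y1 y2
    using vertical_strict_mono[OF B(2) dw pos, of x y1 y2] vertical_strict_mono[OF B(2) dw pos, of x y2 y1]
      that by (cases y1 y2 rule: linorder_cases) (auto simp: Z_def)
  define U where "U = fst ` Z"
  define g where "g x = (THE y. (x, y) \<in> Z)" for x
  have g_eq: "g x = y" if "(x, y) \<in> Z" for x y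
    unfolding g_def by (rule the_equality[where P="\<lambda>y. (x, y) \<in> Z", OF that]) (rule unique[OF _ that])
  have gZ: "(x, g x) \<in> Z" if "x \<in> U" for x
    using that g_eq unfolding U_def by force
  have graph: "Z = (\<lambda>x. (x, g x)) ` U"
  proof
    show "Z \<subseteq> (\<lambda>x. (x, g x)) ` U"
      using g_eq by (force simp: U_def)
  qed (use gZ in blast)
  define Dg where "Dg x = - (1 / snd (F (x, g x))) *\<^sub>R fst (F (x, g x))" for x
  have local: "\<exists>W. open W \<and> x0 \<in> W \<and> W \<subseteq> U \<and> (g has_derivative (\<lambda>h. Dg x0 \<bullet> h)) (at x0)"
    if x0: "x0 \<in> U" for x0
  proof -
    have z0: "(x0, g x0) \<in> B" "w (x0, g x0) = 0" using gZ[OF x0] by (auto simp: Z_def)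
    have nz: "snd (F (x0, g x0)) \<noteq> 0" using pos[OF z0(1)] by simp
    obtain W G where W: "open W" "x0 \<in> W" and dG: "G differentiable (at x0)"
      and on_W: "\<And>x. x \<in> W \<Longrightarrow> (x, G x) \<in> B \<and> w (x, G x) = 0"
      using zero_set_local_graph[OF B(1) dw cF z0 nz] by auto
    have in_Z: "(x, G x) \<in> Z" if "x \<in> W" for x using on_W[OF that] by (simp add: Z_def)
    then have WU: "W \<subseteq> U" by (force simp: U_def)
    have "g differentiable (at x0)"
      using dG W in_Z g_eq unfolding differentiable_def
      by (metis has_derivative_transform_within_open)
    then have "(g has_derivative (\<lambda>h. Dg x0 \<bullet> h)) (at x0)"
      unfolding Dg_def
    proof (rule implicit_function_gradient[where w=w and F="F (x0, g x0)" and g=g and a=x0, OF _ W _ dw[OF z0(1)] nz])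
      show "w (x, g x) = 0" if "x \<in> W" for x
        using in_Z[OF that] g_eq[of x "G x"] unfolding Z_def by auto
    qed
    then show ?thesis using W WU by blast
  qed
  have U: "open U"
    unfolding open_subopen[of U] using local by blast
  have dg: "\<forall>x\<in>U. (g has_derivative (\<lambda>h. Dg x \<bullet> h)) (at x)"
    using local by blast
  have "continuous_on U g"
    using dg by (meson continuous_at_imp_continuous_on has_derivative_continuous)
  moreover have "(\<lambda>x. (x, g x)) ` U \<subseteq> B"
    using graph by (auto simp: Z_def)
  ultimately have "continuous_on U (\<lambda>x. F (x, g x))"
    by (intro continuous_on_compose2[OF cF]) (auto intro!: continuous_intros)
  moreover have "\<forall>x\<in>U. snd (F (x, g x)) \<noteq> 0"
    using gZ pos by (metis IntD2 Z_def less_irrefl)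
  ultimately have "continuous_on U Dg"
    unfolding Dg_def by (auto intro!: continuous_intros)
  then show ?thesis
    unfolding C1_graph_set_def using U dg graph by (auto simp: Z_def)
qed

definition decay_majorant :: "real \<Rightarrow> 'a::real_normed_vector \<Rightarrow> real" where
  "decay_majorant q u = 1 / (1 + max 0 (norm u - 1) powr q)"

lemma decay_majorant_denominator_pos: "0 < 1 + max 0 (norm u - 1) powr q"
  by (simp add: add_pos_nonneg)

lemma decay_majorant_nonneg: "0 \<le> decay_majorant q u"
  using decay_majorant_denominator_pos[of u q] by (simp add: decay_majorant_def)

lemma decay_majorant_le_one: "decay_majorant q u \<le> 1"
  using decay_majorant_denominator_pos[of u q] by (simp add: decay_majorant_def)

lemma continuous_on_decay_majorant:
  assumes "q > 0"
  shows "continuous_on UNIV (decay_majorant q :: 'a::real_normed_vector \<Rightarrow> real)"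
proof -
  have "continuous_on UNIV (\<lambda>u::'a. max 0 (norm u - 1) powr q)"
    by (rule continuous_on_powr') (use assms in \<open>auto intro!: continuous_intros\<close>)
  then show ?thesis
    unfolding decay_majorant_def[abs_def]
  proof (intro continuous_on_divide continuous_on_add continuous_on_const ballI)
    show "1 + max 0 (norm u - 1) powr q \<noteq> 0" for u :: 'a
      using decay_majorant_denominator_pos[of u q] by linarith
  qed
qed

lemma decay_majorant_shift:
  assumes "norm v < 1" "0 \<le> q"
  shows "1 / (1 + norm (u - v) powr q) \<le> decay_majorant q u"
proof -
  have "norm u \<le> norm (u - v) + norm v" by (metis norm_triangle_sub add.commute)
  then have "max 0 (norm u - 1) \<le> norm (u - v)" using assms by auto
  then have "max 0 (norm u - 1) powr q \<le> norm (u - v) powr q" using assms by (intro powr_mono2) auto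
  then show ?thesis unfolding decay_majorant_def
    using decay_majorant_denominator_pos[of u q] by (intro divide_left_mono) auto
qed

lemma integrable_decay_majorant:
  fixes q :: real
  assumes q: "q > DIM('a)"
  shows "integrable lborel (decay_majorant q :: 'a::euclidean_space \<Rightarrow> real)"
proof (rule integrable_power_decay[where C="2 powr q" and R=2 and p=q])
  have "q > 0" using q of_nat_0_le_iff[of "DIM('a)"] by linarith
  then show "decay_majorant q \<in> borel_measurable borel"
    by (intro borel_measurable_continuous_onI continuous_on_decay_majorant)
  fix u :: 'a
  show "decay_majorant q u \<le> 2 powr q"
    using decay_majorant_le_one[of q u] \<open>q > 0\<close> ge_one_powr_ge_zero[of 2 q] by linarith
  assume u: "2 \<le> norm u"
  have "(norm u / 2) powr q \<le> max 0 (norm u - 1) powr q"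
    using u \<open>q > 0\<close> by (intro powr_mono2) auto
  then have le: "norm u powr q / 2 powr q \<le> max 0 (norm u - 1) powr q"
    using u by (simp add: powr_divide)
  have "u \<noteq> 0" using u by auto
  then have pos: "0 < norm u powr q / 2 powr q" by simp
  have "decay_majorant q u \<le> 1 / (norm u powr q / 2 powr q)"
    unfolding decay_majorant_def using le pos mult_pos_pos[OF decay_majorant_denominator_pos[of u q] pos]
    by (intro divide_left_mono) (auto simp: times_divide_eq_right)
  also have "\<dots> = 2 powr q * norm u powr (- q)" by (simp add: powr_minus_divide)
  finally show "decay_majorant q u \<le> 2 powr q * norm u powr (- q)" .
qed (use decay_majorant_nonneg q in auto)

definition half_space_sign :: "'a \<times> real \<Rightarrow> real" where
  "half_space_sign y = (if snd y > 0 then 1 else -1)"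

lemma half_space_sign_measurable[measurable]:
  "half_space_sign \<in> borel_measurable (borel :: ('a::euclidean_space \<times> real) measure)"
proof -
  have [measurable]: "{y :: 'a \<times> real. 0 < snd y} \<in> sets borel"
    by (intro borel_open open_Collect_less continuous_intros)
  have eq: "half_space_sign = (\<lambda>y::'a \<times> real. 2 * indicator {y. 0 < snd y} y - 1)"
    by (auto simp: half_space_sign_def[abs_def] indicator_def)
  show ?thesis unfolding eq by measurable
qed

lemma abs_half_space_sign: "\<bar>half_space_sign y\<bar> = 1"
  by (simp add: half_space_sign_def)

lemma tauE_measurable[measurable]:
  fixes E :: "((real^'m::finite) \<times> real) set"
  assumes "open E"
  shows "tauE E \<in> borel_measurable borel"
proof -
  have [measurable]: "E \<in> sets borel" "- closure E \<in> sets borel"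
    using assms by auto
  show ?thesis unfolding tauE_def[abs_def] by measurable
qed

lemma abs_tauE_le: "\<bar>tauE E y\<bar> \<le> 1"
  using closure_subset[of E] by (auto simp: tauE_def indicator_def)

lemma DERIV_ge_of_increments:
  fixes f :: "real \<Rightarrow> real"
  assumes "(f has_real_derivative D) (at x)" and "d > 0"
    and incr: "\<And>h. 0 < h \<Longrightarrow> h < d \<Longrightarrow> c * h \<le> f (x + h) - f x"
  shows "c \<le> D"
proof (rule tendsto_lowerbound)
  show "((\<lambda>h. (f (x + h) - f x) / h) \<longlongrightarrow> D) (at_right 0)"
    using DERIV_D[OF assms(1)] by (rule tendsto_mono[OF at_le[OF subset_UNIV]])
  show "\<forall>\<^sub>F h in at_right 0. c \<le> (f (x + h) - f x) / h"
    unfolding eventually_at_right_field using \<open>d > 0\<close> incr by (auto simp: le_divide_eq)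
qed simp

lemma convol_grad_diff:
  fixes DK :: "'a::euclidean_space \<Rightarrow> 'a" and g1 g2 H :: "'a \<Rightarrow> real"
  assumes [measurable]: "DK \<in> borel_measurable borel" "g1 \<in> borel_measurable borel" "g2 \<in> borel_measurable borel"
    and "\<And>y. \<bar>g1 y\<bar> \<le> M1" "\<And>y. \<bar>g2 y\<bar> \<le> M2" and "integrable lborel H"
    and "\<And>y. norm (DK (z - y)) \<le> H y"
  shows "convol_grad DK (\<lambda>y. g1 y - g2 y) z = convol_grad DK g1 z - convol_grad DK g2 z"
  using integrable_convol_grad[of DK g1 M1 H z] integrable_convol_grad[of DK g2 M2 H z] assms
  by (simp add: convol_grad_def scaleR_diff_left)

lemma norm_convol_grad_le:
  fixes DK :: "'a::euclidean_space \<Rightarrow> 'a" and g H :: "'a \<Rightarrow> real"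
  assumes [measurable]: "DK \<in> borel_measurable borel" "g \<in> borel_measurable borel" "S \<in> sets borel"
    and g: "\<And>y. \<bar>g y\<bar> \<le> M" and g0: "\<And>y. y \<notin> S \<Longrightarrow> g y = 0"
    and H: "integrable lborel H" and dom: "\<And>y. norm (DK (z - y)) \<le> H y"
  shows "norm (convol_grad DK g z) \<le> M * (\<integral>y. H y * indicator S y \<partial>lborel)"
proof -
  have "norm (convol_grad DK g z) \<le> (\<integral>y. norm (g y *\<^sub>R DK (z - y)) \<partial>lborel)"
    unfolding convol_grad_def by (rule integral_norm_bound)
  also have "\<dots> \<le> (\<integral>y. M * (H y * indicator S y) \<partial>lborel)"
  proof (rule integral_mono)
    show "integrable lborel (\<lambda>y. norm (g y *\<^sub>R DK (z - y)))"
      using integrable_convol_grad[OF assms(1,2) g H dom] by (rule integrable_norm)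
    have "integrable lborel (\<lambda>y. H y * indicator S y)"
      using H dom order_trans[OF norm_ge_zero dom]
      by (intro Bochner_Integration.integrable_bound[OF H]) (auto simp: indicator_def)
    then show "integrable lborel (\<lambda>y. M * (H y * indicator S y))" by simp
    show "norm (g y *\<^sub>R DK (z - y)) \<le> M * (H y * indicator S y)" for y
      using g[of y] g0[of y] dom[of y] order_trans[OF abs_ge_zero g]
      by (cases "y \<in> S") (auto intro: mult_mono)
  qed
  finally show ?thesis by simp
qed

lemma heat_w_rescaled:
  fixes E :: "((real^'m::finite) \<times> real) set"
  assumes "0 < s" "0 < t"
  defines "a \<equiv> t powr (- 1 / (2 * s))"
  shows "heat_w s P E z t = convol P (\<lambda>u. tauE E (u /\<^sub>R a)) (a *\<^sub>R z)"
proof -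
  have a: "a > 0" using assms by simp
  have "a ^ DIM((real^'m) \<times> real) = a powr real (CARD('m) + 1)"
    using powr_realpow[OF a, of "CARD('m) + 1"] by simp
  also have "\<dots> = t powr (- 1 / (2 * s) * real (CARD('m) + 1))"
    by (simp only: a_def powr_powr)
  also have "- 1 / (2 * s) * real (CARD('m) + 1) = - real (CARD('m) + 1) / (2 * s)"
    by (simp add: add_divide_distrib diff_divide_distrib)
  finally have power: "t powr (- real (CARD('m) + 1) / (2 * s)) = a ^ DIM((real^'m) \<times> real)" ..
  have "heat_w s P E z t = (\<integral>y. a ^ DIM((real^'m) \<times> real) * P (a *\<^sub>R (z - y)) * tauE E y \<partial>lborel)"
    unfolding heat_w_def kern_def power a_def[symmetric] ..
  also have "\<dots> = \<bar>1 / a\<bar> ^ DIM((real^'m) \<times> real) *\<^sub>R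
      (\<integral>u. a ^ DIM((real^'m) \<times> real) * P (a *\<^sub>R (z - (1 / a) *\<^sub>R u)) * tauE E ((1 / a) *\<^sub>R u) \<partial>lborel)"
    using a by (subst lborel_integral_affine[where c="1 / a" and t=0]) auto
  also have "\<dots> = convol P (\<lambda>u. tauE E (u /\<^sub>R a)) (a *\<^sub>R z)"
    using a by (simp add: convol_def scaleR_diff_right power_one_over field_simps)
  finally show ?thesis .
qed

lemma tauE_eq_half_space_sign:
  fixes E :: "((real^'m::finite) \<times> real) set" and \<gamma> :: "real^'m \<Rightarrow> real"
  assumes E: "E \<inter> cyl r = {(y', yN). (y', yN) \<in> cyl r \<and> yN > \<gamma> y'}"
    and \<gamma>: "continuous_on (ball 0 r) \<gamma>"
    and y: "norm y < r" and above_graph: "\<bar>snd y\<bar> > \<bar>\<gamma> (fst y)\<bar>"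
  shows "tauE E y = half_space_sign y"
proof -
  have cyl: "cyl r = ball 0 r \<times> {-r<..<r}" by (auto simp: cyl_def)
  have y_cyl: "y \<in> cyl r"
    using le_less_trans[OF norm_fst_le[of "fst y" "snd y", unfolded prod.collapse] y]
      le_less_trans[OF norm_snd_le[of "snd y" "fst y", unfolded prod.collapse] y]
    by (cases y) (auto simp: cyl_def)
  show ?thesis
  proof (cases "snd y > 0")
    case True
    then have "y \<in> E" using E y_cyl above_graph by (cases y) auto
    then show ?thesis using True closure_subset[of E] by (auto simp: tauE_def half_space_sign_def)
  next
    case False
    \<comment> \<open>the strict subgraph is an open set missing \<open>E\<close>, so \<open>y\<close> is exterior to \<open>E\<close>\<close>
    define S where "S = cyl r \<inter> (\<lambda>v. \<gamma> (fst v) - snd v) -` {0<..}"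
    have "continuous_on (cyl r) (\<lambda>v. \<gamma> (fst v) - snd v)"
      by (intro continuous_intros continuous_on_compose2[OF \<gamma>]) (auto simp: cyl_def)
    moreover have "open (cyl r)" by (simp add: cyl open_Times)
    ultimately have "open S"
      unfolding S_def using open_greaterThan by (rule continuous_open_preimage)
    moreover have "S \<inter> E = {}"
    proof safe
      fix v assume "v \<in> S" "v \<in> E"
      then have "v \<in> E \<inter> cyl r" "\<gamma> (fst v) > snd v" by (auto simp: S_def)
      then show "v \<in> {}" using E by (cases v) auto
    qed
    ultimately have "S \<inter> closure E = {}" by (simp add: open_Int_closure_eq_empty)
    moreover have "y \<in> S" using y_cyl False above_graph by (auto simp: S_def)
    ultimately have "y \<notin> closure E" "y \<notin> E" using closure_subset[of E] by auto
    then show ?thesis using False by (simp add: tauE_def half_space_sign_def)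
  qed
qed

(* aE agrees with the half-space u_N > 0 off this set: the dilated cylinder has radius a r,
   and the dilated graph of gamma lies in the cusp |u_N| <= C a^(-beta) |u'|^(1+beta). *)
definition blowup_defect_set :: "real \<Rightarrow> real \<Rightarrow> real \<Rightarrow> real \<Rightarrow> ('a::real_normed_vector \<times> real) set" where
  "blowup_defect_set r C \<beta> a =
     {u. a * r \<le> norm u \<or> \<bar>snd u\<bar> \<le> C * a powr (- \<beta>) * norm (fst u) powr (1 + \<beta>)}"

lemma closed_blowup_defect_set:
  assumes "\<beta> > 0"
  shows "closed (blowup_defect_set r C \<beta> a)"
proof -
  have "continuous_on UNIV (\<lambda>u::'a \<times> real. norm (fst u) powr (1 + \<beta>))"
    by (rule continuous_on_powr') (use assms in \<open>auto intro!: continuous_intros\<close>)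
  then show ?thesis
    unfolding blowup_defect_set_def
    by (intro closed_Collect_disj closed_Collect_le continuous_on_mult continuous_on_const)
      (auto intro!: continuous_intros)
qed

lemma tauE_blowup_eq_half_space_sign:
  fixes E :: "((real^'m::finite) \<times> real) set" and \<gamma> :: "real^'m \<Rightarrow> real"
  assumes E: "E \<inter> cyl r = {(y', yN). (y', yN) \<in> cyl r \<and> yN > \<gamma> y'}"
    and \<gamma>: "continuous_on (ball 0 r) \<gamma>"
    and \<gamma>_bound: "\<forall>y'\<in>ball 0 r. \<bar>\<gamma> y'\<bar> \<le> C\<gamma> * norm y' powr (1 + \<beta>)"
    and a: "a > 0" and u: "u \<notin> blowup_defect_set r C\<gamma> \<beta> a"
  shows "tauE E (u /\<^sub>R a) = half_space_sign u"
proof -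
  define y where "y = u /\<^sub>R a"
  have "norm u < a * r" using u by (simp add: blowup_defect_set_def mult.commute)
  then have y_r: "norm y < r" using a by (simp add: y_def field_simps)
  have u_eq: "u = a *\<^sub>R y" using a by (simp add: y_def)
  have "norm (fst u) powr (1 + \<beta>) = a powr (1 + \<beta>) * norm (fst y) powr (1 + \<beta>)"
    using a by (simp add: u_eq powr_mult)
  moreover have "a powr (- \<beta>) * a powr (1 + \<beta>) = a"
    using a by (simp add: powr_add[symmetric])
  ultimately have "a * (C\<gamma> * norm (fst y) powr (1 + \<beta>)) = C\<gamma> * a powr (- \<beta>) * norm (fst u) powr (1 + \<beta>)"
    by (metis mult.assoc mult.left_commute)
  also have "\<dots> < \<bar>snd u\<bar>" using u by (simp add: blowup_defect_set_def)
  also have "\<dots> = a * \<bar>snd y\<bar>" using a by (simp add: u_eq abs_mult)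
  finally have "C\<gamma> * norm (fst y) powr (1 + \<beta>) < \<bar>snd y\<bar>" using a by simp
  moreover have "\<bar>\<gamma> (fst y)\<bar> \<le> C\<gamma> * norm (fst y) powr (1 + \<beta>)"
    using \<gamma>_bound y_r norm_fst_le[of "fst y" "snd y"] by simp
  ultimately have "\<bar>\<gamma> (fst y)\<bar> < \<bar>snd y\<bar>" by linarith
  then have "tauE E y = half_space_sign y"
    by (rule tauE_eq_half_space_sign[OF E \<gamma> y_r])
  then show ?thesis using a by (simp add: y_def half_space_sign_def zero_less_mult_iff)
qed

lemma null_sets_horizontal_hyperplane:
  "{u :: 'a::euclidean_space \<times> real. snd u = 0} \<in> null_sets lborel"
proof -
  have "emeasure (lborel \<Otimes>\<^sub>M lborel) ((UNIV :: 'a set) \<times> {0::real})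
      = emeasure lborel (UNIV :: 'a set) * emeasure lborel {0::real}"
    by (intro sigma_finite_measure.emeasure_pair_measure_Times) (auto intro: sigma_finite_lborel)
  then have "emeasure (lborel :: ('a \<times> real) measure) (UNIV \<times> {0}) = 0"
    by (simp add: lborel_prod)
  moreover have "{u :: 'a \<times> real. snd u = 0} = UNIV \<times> {0}" by auto
  ultimately show ?thesis by (auto simp: null_sets_def intro: borel_closed closed_Times)
qed

lemma tendsto_integral_blowup_defect_set:
  fixes G :: "'a::euclidean_space \<times> real \<Rightarrow> real"
  assumes G: "integrable lborel G" and G0: "\<And>u. 0 \<le> G u" and "r > 0" "\<beta> > 0"
  shows "((\<lambda>a. \<integral>u. G u * indicator (blowup_defect_set r C \<beta> a) u \<partial>lborel) \<longlongrightarrow> 0) at_top"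
proof -
  have [measurable]: "G \<in> borel_measurable borel"
    using G by (simp add: borel_measurable_integrable)
  have [measurable]: "blowup_defect_set r C \<beta> a \<in> sets borel" for a
    using closed_blowup_defect_set[OF \<open>\<beta> > 0\<close>] by (rule borel_closed)
  have leaves: "\<forall>\<^sub>F a in at_top. u \<notin> blowup_defect_set r C \<beta> a" if "snd u \<noteq> 0" for u :: "'a \<times> real"
  proof -
    have "((\<lambda>a. a powr (- \<beta>)) \<longlongrightarrow> 0) at_top"
      using \<open>\<beta> > 0\<close> by (intro tendsto_neg_powr filterlim_ident) auto
    then have "((\<lambda>a. C * a powr (- \<beta>) * norm (fst u) powr (1 + \<beta>)) \<longlongrightarrow> C * 0 * norm (fst u) powr (1 + \<beta>)) at_top"
      by (intro tendsto_mult tendsto_const)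
    then have "\<forall>\<^sub>F a in at_top. C * a powr (- \<beta>) * norm (fst u) powr (1 + \<beta>) < \<bar>snd u\<bar>"
      using that by (intro order_tendstoD(2)) auto
    moreover have "\<forall>\<^sub>F a in at_top. norm u / r < a" by (rule eventually_gt_at_top)
    ultimately show ?thesis
    proof eventually_elim
      case (elim a)
      then have "norm u < a * r" using \<open>r > 0\<close> by (simp add: divide_less_eq)
      then show ?case using elim(1) by (simp add: blowup_defect_set_def)
    qed
  qed
  have "((\<lambda>a. \<integral>u. G u * indicator (blowup_defect_set r C \<beta> a) u \<partial>lborel)
      \<longlongrightarrow> (\<integral>u. 0 \<partial>(lborel :: ('a \<times> real) measure))) at_top"
  proof (rule integral_dominated_convergence_at_top[where w=G])
    have "AE u in lborel. u \<notin> {u :: 'a \<times> real. snd u = 0}"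
      by (rule AE_not_in[OF null_sets_horizontal_hyperplane])
    then show "AE u in lborel. ((\<lambda>a. G u * indicator (blowup_defect_set r C \<beta> a) u) \<longlongrightarrow> 0) at_top"
    proof eventually_elim
      case (elim u)
      then have "\<forall>\<^sub>F a in at_top. G u * indicator (blowup_defect_set r C \<beta> a) u = 0"
        using leaves[of u] by (simp add: eventually_mono)
      then show ?case by (rule tendsto_eventually)
    qed
    show "\<forall>\<^sub>F a in at_top. AE u in lborel. norm (G u * indicator (blowup_defect_set r C \<beta> a) u) \<le> G u"
      using G0 by (intro always_eventually allI AE_I2) (simp add: indicator_def)
    show "integrable lborel G" by (rule G)
  qed measurable
  then show ?thesis by simp
qed

locale decaying_profile =
  fixes P :: "'a::euclidean_space \<times> real \<Rightarrow> real" and DP :: "'a \<times> real \<Rightarrow> 'a \<times> real"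
    and Cc p q :: real
  assumes P_deriv: "\<And>y. (P has_derivative (\<lambda>h. DP y \<bullet> h)) (at y)"
    and DP_cont: "continuous_on UNIV DP"
    and DP_bound: "\<And>y. norm (DP y) \<le> Cc / (1 + norm y powr q)"
    and P_lower: "\<And>y. (1 / Cc) / (1 + norm y powr p) \<le> P y"
    and P_upper: "\<And>y. P y \<le> Cc / (1 + norm y powr p)"
    and Cc_pos: "0 < Cc" and p_gt: "DIM('a \<times> real) < p" and q_gt: "DIM('a \<times> real) < q"
begin

lemma P_nonneg: "0 \<le> P y"
proof -
  have "0 \<le> (1 / Cc) / (1 + norm y powr p)" using Cc_pos by (simp add: add_nonneg_nonneg)
  then show ?thesis using P_lower[of y] by linarith
qed

lemma DP_measurable[measurable]: "DP \<in> borel_measurable borel"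
  using DP_cont by (rule borel_measurable_continuous_onI)

lemma P_measurable[measurable]: "P \<in> borel_measurable borel"
  using P_deriv by (intro borel_measurable_continuous_onI continuous_at_imp_continuous_on)
    (meson has_derivative_continuous)

lemma P_integrable: "integrable lborel P"
proof (rule integrable_power_decay[where C=Cc and R=1 and p=p])
  fix y :: "'a \<times> real"
  have "Cc / (1 + norm y powr p) \<le> Cc / 1"
    using Cc_pos by (intro divide_left_mono) (auto simp: add_pos_nonneg)
  then show "P y \<le> Cc" using P_upper[of y] by simp
  assume "1 \<le> norm y"
  then have "0 < norm y powr p" by auto
  moreover have "0 < 1 + norm y powr p" by (simp add: add_pos_nonneg)
  ultimately have "Cc / (1 + norm y powr p) \<le> Cc / norm y powr p"
    using Cc_pos by (intro divide_left_mono) auto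
  then show "P y \<le> Cc * norm y powr (- p)"
    using P_upper[of y] by (simp add: powr_minus_divide)
qed (use P_nonneg P_measurable p_gt in auto)

lemma DP_dominated:
  assumes "\<zeta> \<in> ball z 1"
  shows "norm (DP (\<zeta> - y)) \<le> Cc * decay_majorant q (y - z)"
proof -
  have "q \<ge> 0" using q_gt by linarith
  have "norm (\<zeta> - z) < 1" using assms by (simp add: dist_norm norm_minus_commute)
  from decay_majorant_shift[OF this \<open>q \<ge> 0\<close>, of "y - z"]
  have "1 / (1 + norm (\<zeta> - y) powr q) \<le> decay_majorant q (y - z)"
    by (simp add: norm_minus_commute)
  then show ?thesis
    using DP_bound[of "\<zeta> - y"] mult_left_mono[OF _ less_imp_le[OF Cc_pos]] by fastforce
qed

lemma integrable_DP_majorant: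
  fixes z :: "'a \<times> real"
  shows "integrable lborel (\<lambda>y. Cc * decay_majorant q (y - z))"
  using lborel_integrable_affine[OF integrable_decay_majorant[OF q_gt], of 1 "- z"] by simp

lemma has_derivative_convol_profile:
  assumes "g \<in> borel_measurable borel" "\<And>y. \<bar>g y\<bar> \<le> M"
  shows "(convol P g has_derivative (\<lambda>h. convol_grad DP g z \<bullet> h)) (at z)"
  by (rule has_derivative_convol[OF P_deriv DP_measurable assms(1) P_integrable assms(2)
        integrable_DP_majorant zero_less_one DP_dominated])

lemma isCont_convol_grad_profile:
  assumes "g \<in> borel_measurable borel" "\<And>y. \<bar>g y\<bar> \<le> M"
  shows "isCont (convol_grad DP g) z"
  by (rule isCont_convol_grad[OF DP_cont assms integrable_DP_majorant zero_less_one DP_dominated])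

lemma convol_half_space_sign_increment:
  assumes z: "norm z < 1" and h: "0 < h" "h < 1"
  shows "2 / (Cc * (1 + 3 powr p)) * (2 / DIM('a)) ^ DIM('a) * h
    \<le> convol P half_space_sign (z + (0, h)) - convol P half_space_sign z"
proof -
  define \<delta> where "\<delta> = 1 / real DIM('a)"
  define S where "S = cbox (- (\<delta> *\<^sub>R One)) (\<delta> *\<^sub>R One :: 'a) \<times> {-h<..<0}"
  define \<kappa> where "\<kappa> = 1 / (Cc * (1 + 3 powr p))"
  have \<delta>: "\<delta> > 0" by (simp add: \<delta>_def)
  have conv: "integrable lborel (\<lambda>y. P (z - y) * half_space_sign (t + y))" for t
  proof (rule integrable_convol[OF P_integrable, where M=1])
    show "(\<lambda>y. half_space_sign (t + y)) \<in> borel_measurable borel" by measurable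
  qed (simp add: abs_half_space_sign)
  have "convol P half_space_sign (z + (0, h))
      = \<bar>1\<bar> ^ DIM('a \<times> real) *\<^sub>R (\<integral>y. P (z + (0, h) - ((0, h) + 1 *\<^sub>R y)) * half_space_sign ((0, h) + 1 *\<^sub>R y) \<partial>lborel)"
    unfolding convol_def by (rule lborel_integral_affine) simp
  then have diff: "convol P half_space_sign (z + (0, h)) - convol P half_space_sign z
      = (\<integral>y. P (z - y) * (half_space_sign ((0, h) + y) - half_space_sign y) \<partial>lborel)"
    using conv[of "(0, h)"] conv[of 0] by (simp add: convol_def algebra_simps)
  have S_meas: "S \<in> sets lborel"
    unfolding S_def lborel_prod[symmetric] by (intro pair_measureI) auto
  have S_emeasure: "emeasure lborel S = ennreal ((2 * \<delta>) ^ DIM('a) * h)"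
    unfolding S_def using \<delta> h by (simp add: emeasure_lborel_cube_times_interval)
  then have S_measure: "measure lborel S = (2 * \<delta>) ^ DIM('a) * h"
    using \<delta> h by (simp add: measure_def)
  have pointwise: "2 * \<kappa> * indicator S y \<le> P (z - y) * (half_space_sign ((0, h) + y) - half_space_sign y)" for y
  proof (cases "y \<in> S")
    case True
    then have y: "fst y \<in> cbox (- (\<delta> *\<^sub>R One)) (\<delta> *\<^sub>R One)" "-h < snd y" "snd y < 0"
      by (auto simp: S_def)
    have "norm (fst y) \<le> (\<Sum>b\<in>Basis. \<bar>fst y \<bullet> b\<bar>)" by (rule norm_le_l1)
    also have "\<dots> \<le> (\<Sum>b\<in>(Basis :: 'a set). \<delta>)"
      using y(1) by (intro sum_mono) (auto simp: mem_box abs_le_iff)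
    also have "\<dots> = 1" by (simp add: \<delta>_def)
    finally have "norm (z - y) \<le> 3"
      using norm_triangle_ineq4[of z y] norm_Pair_le[of "fst y" "snd y"] z y h by simp
    then have "norm (z - y) powr p \<le> 3 powr p" using p_gt by (intro powr_mono2) auto
    then have "\<kappa> \<le> (1 / Cc) / (1 + norm (z - y) powr p)"
      unfolding \<kappa>_def using Cc_pos by (simp add: field_simps add_pos_nonneg)
    then have "\<kappa> \<le> P (z - y)" using P_lower[of "z - y"] by linarith
    moreover have "half_space_sign ((0, h) + y) - half_space_sign y = 2"
      using y by (simp add: half_space_sign_def)
    ultimately show ?thesis using True by simp
  next
    case False
    have "0 \<le> half_space_sign ((0, h) + y) - half_space_sign y"
      using h by (simp add: half_space_sign_def)
    then show ?thesis using False P_nonneg[of "z - y"] by simp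
  qed
  have "(\<integral>y. 2 * \<kappa> * indicator S y \<partial>lborel) \<le> (\<integral>y. P (z - y) * (half_space_sign ((0, h) + y) - half_space_sign y) \<partial>lborel)"
  proof (rule integral_mono[OF _ _ pointwise])
    show "integrable lborel (\<lambda>y. 2 * \<kappa> * indicator S y :: real)"
      using S_meas S_emeasure by (simp add: integrable_indicator_iff)
    show "integrable lborel (\<lambda>y. P (z - y) * (half_space_sign ((0, h) + y) - half_space_sign y))"
      using Bochner_Integration.integrable_diff[OF conv[of "(0, h)"] conv[of 0]] by (simp add: algebra_simps)
  qed
  moreover have "(\<integral>y. 2 * \<kappa> * indicator S y \<partial>lborel) = 2 / (Cc * (1 + 3 powr p)) * (2 / DIM('a)) ^ DIM('a) * h"
    using S_measure by (simp add: \<kappa>_def \<delta>_def)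
  ultimately show ?thesis unfolding diff by simp
qed

lemma half_space_gradient_lower_bound:
  "\<exists>c>0. \<forall>z\<in>ball 0 1. c \<le> snd (convol_grad DP half_space_sign z)"
proof (intro exI conjI ballI)
  define c where "c = 2 / (Cc * (1 + 3 powr p)) * (2 / DIM('a)) ^ DIM('a)"
  show "c > 0" unfolding c_def using Cc_pos by (simp add: add_pos_nonneg)
  fix z :: "'a \<times> real" assume "z \<in> ball 0 1"
  then have z: "norm z < 1" by simp
  have "(convol P half_space_sign has_derivative (\<lambda>v. convol_grad DP half_space_sign z \<bullet> v)) (at (z + (0, 0)))"
    using has_derivative_convol_profile[OF half_space_sign_measurable order_eq_refl[OF abs_half_space_sign]]
    by (simp add: zero_prod_def[symmetric])
  from has_real_derivative_vertical[OF this]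
  show "c \<le> snd (convol_grad DP half_space_sign z)"
    by (rule DERIV_ge_of_increments[OF _ zero_less_one])
      (use convol_half_space_sign_increment[OF z] in \<open>simp add: c_def zero_prod_def[symmetric]\<close>)
qed

lemma gradient_perturbation_bound:
  assumes [measurable]: "g \<in> borel_measurable borel" "S \<in> sets borel"
    and g: "\<And>y. \<bar>g y\<bar> \<le> 1" and g_outside: "\<And>y. y \<notin> S \<Longrightarrow> g y = half_space_sign y"
    and z: "norm z < 1"
  shows "\<bar>snd (convol_grad DP g z) - snd (convol_grad DP half_space_sign z)\<bar>
    \<le> 2 * Cc * (\<integral>y. decay_majorant q y * indicator S y \<partial>lborel)"
proof -
  have dom: "norm (DP (z - y)) \<le> Cc * decay_majorant q y" for y
    using DP_dominated[of z 0 y] z by simp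
  have H: "integrable lborel (\<lambda>y :: 'a \<times> real. Cc * decay_majorant q y)"
    using integrable_DP_majorant[of 0] by simp
  have "\<bar>g y - half_space_sign y\<bar> \<le> 2" for y
    using g[of y] abs_half_space_sign[of y] by linarith
  then have "norm (convol_grad DP (\<lambda>y. g y - half_space_sign y) z)
      \<le> 2 * (\<integral>y. Cc * decay_majorant q y * indicator S y \<partial>lborel)"
    by (intro norm_convol_grad_le[OF DP_measurable _ _ _ _ H dom]) (auto simp: g_outside)
  moreover have "convol_grad DP (\<lambda>y. g y - half_space_sign y) z
      = convol_grad DP g z - convol_grad DP half_space_sign z"
    by (rule convol_grad_diff[OF DP_measurable _ _ g abs_half_space_sign[THEN order_eq_refl] H dom]) simp_all
  ultimately have "norm (convol_grad DP g z - convol_grad DP half_space_sign z)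
      \<le> 2 * Cc * (\<integral>y. decay_majorant q y * indicator S y \<partial>lborel)"
    by (simp add: mult.assoc)
  moreover have "\<bar>snd (convol_grad DP g z) - snd (convol_grad DP half_space_sign z)\<bar>
      \<le> norm (convol_grad DP g z - convol_grad DP half_space_sign z)"
    using norm_snd_le[of "snd (convol_grad DP g z - convol_grad DP half_space_sign z)"
        "fst (convol_grad DP g z - convol_grad DP half_space_sign z)", unfolded prod.collapse]
    by simp
  ultimately show ?thesis by linarith
qed

end

lemma blowup_gradient_lower_bound:
  fixes E :: "((real^'m::finite) \<times> real) set" and \<gamma> :: "real^'m \<Rightarrow> real"
  assumes "decaying_profile P DP Cc p q" and "open E"
    and E: "E \<inter> cyl r = {(y', yN). (y', yN) \<in> cyl r \<and> yN > \<gamma> y'}"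
    and \<gamma>: "continuous_on (ball 0 r) \<gamma>"
    and \<gamma>_bound: "\<forall>y'\<in>ball 0 r. \<bar>\<gamma> y'\<bar> \<le> C\<gamma> * norm y' powr (1 + \<beta>)"
    and "r > 0" "\<beta> > 0"
  shows "\<exists>c>0. \<forall>\<^sub>F a in at_top. \<forall>x\<in>ball 0 1. c \<le> snd (convol_grad DP (\<lambda>u. tauE E (u /\<^sub>R a)) x)"
proof -
  interpret decaying_profile P DP Cc p q by fact
  obtain c where c: "c > 0" and half_space: "\<And>x. x \<in> ball 0 1 \<Longrightarrow> c \<le> snd (convol_grad DP half_space_sign x)"
    using half_space_gradient_lower_bound by blast
  let ?defect = "\<lambda>a. \<integral>y. decay_majorant q (y :: (real^'m) \<times> real) * indicator (blowup_defect_set r C\<gamma> \<beta> a) y \<partial>lborel"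
  have "(?defect \<longlongrightarrow> 0) at_top"
    by (rule tendsto_integral_blowup_defect_set[OF integrable_decay_majorant[OF q_gt]
          decay_majorant_nonneg \<open>r > 0\<close> \<open>\<beta> > 0\<close>])
  then have "\<forall>\<^sub>F a in at_top. 2 * Cc * ?defect a < c / 2"
    using Cc_pos c by (intro order_tendstoD(2)) (auto intro!: tendsto_eq_intros)
  moreover have "\<forall>\<^sub>F a in at_top. (0::real) < a" by (rule eventually_gt_at_top)
  ultimately have "\<forall>\<^sub>F a in at_top. \<forall>x\<in>ball 0 1. c / 2 \<le> snd (convol_grad DP (\<lambda>u. tauE E (u /\<^sub>R a)) x)"
  proof eventually_elim
    case (elim a)
    have [measurable]: "blowup_defect_set r C\<gamma> \<beta> a \<in> sets borel"
      using closed_blowup_defect_set[OF \<open>\<beta> > 0\<close>] by (rule borel_closed)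
    have [measurable]: "tauE E \<in> borel_measurable borel" using \<open>open E\<close> by (rule tauE_measurable)
    show ?case
    proof
      fix x :: "(real^'m) \<times> real" assume x: "x \<in> ball 0 1"
      have "\<bar>snd (convol_grad DP (\<lambda>u. tauE E (u /\<^sub>R a)) x) - snd (convol_grad DP half_space_sign x)\<bar>
          \<le> 2 * Cc * ?defect a"
        using x tauE_blowup_eq_half_space_sign[OF E \<gamma> \<gamma>_bound \<open>0 < a\<close>]
        by (intro gradient_perturbation_bound) (auto simp: abs_tauE_le)
      then show "c / 2 \<le> snd (convol_grad DP (\<lambda>u. tauE E (u /\<^sub>R a)) x)"
        using elim(1) half_space[OF x] by linarith
    qed
  qed
  then show ?thesis using c by (intro exI[of _ "c / 2"]) auto
qed

lemma eventually_at_top_time_rescaled: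
  fixes Q :: "real \<Rightarrow> bool"
  assumes "0 < s" and "\<forall>\<^sub>F a in at_top. Q a"
  shows "\<exists>t0>0. \<forall>t. 0 < t \<and> t < t0 \<longrightarrow> Q (t powr (- 1 / (2 * s)))"
proof -
  obtain A where A: "\<And>a. A \<le> a \<Longrightarrow> Q a"
    using assms(2) by (auto simp: eventually_at_top_linorder)
  define A' where "A' = max A 1"
  have A': "A' > 0" by (simp add: A'_def)
  show ?thesis
  proof (intro exI[of _ "A' powr (- 2 * s)"] conjI allI impI)
    show "A' powr (- 2 * s) > 0" using A' by simp
    fix t assume t: "0 < t \<and> t < A' powr (- 2 * s)"
    then have "(A' powr (- 2 * s)) powr (- 1 / (2 * s)) < t powr (- 1 / (2 * s))"
      using assms(1) by (intro powr_less_mono2_neg) auto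
    moreover have "(A' powr (- 2 * s)) powr (- 1 / (2 * s)) = A'"
      using A' assms(1) by (simp add: powr_powr)
    ultimately show "Q (t powr (- 1 / (2 * s)))"
      by (intro A) (simp add: A'_def)
  qed
qed

lemma heat_w_time_slice:
  fixes E :: "((real^'m::finite) \<times> real) set" and P :: "(real^'m) \<times> real \<Rightarrow> real"
  assumes "decaying_profile P DP Cc p q" "open E" "0 < s" "0 < t" "0 < c"
    and lower: "\<forall>x\<in>ball 0 1. c \<le> snd (convol_grad DP (\<lambda>u. tauE E (u /\<^sub>R t powr (- 1 / (2 * s)))) x)"
  shows "(\<forall>z\<in>ball 0 (t powr (1 / (2 * s))).
            \<exists>D. ((\<lambda>h. heat_w s P E (z + (0, h)) t) has_real_derivative D) (at 0) \<and>
                D \<ge> c * t powr (- 1 / (2 * s))) \<and>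
         C1_graph_set ({z. heat_w s P E z t = 0} \<inter> ball 0 (t powr (1 / (2 * s))))"
proof -
  interpret decaying_profile P DP Cc p q by fact
  define a where "a = t powr (- 1 / (2 * s))"
  define g where "g u = tauE E (u /\<^sub>R a)" for u
  define F where "F z = a *\<^sub>R convol_grad DP g (a *\<^sub>R z)" for z
  have a: "a > 0" using \<open>0 < t\<close> by (simp add: a_def)
  have radius: "t powr (1 / (2 * s)) = 1 / a"
    using \<open>0 < t\<close> by (simp add: a_def powr_minus_divide)
  have [measurable]: "tauE E \<in> borel_measurable borel" using \<open>open E\<close> by (rule tauE_measurable)
  have g_meas: "g \<in> borel_measurable borel" unfolding g_def by measurable
  have g_bound: "\<bar>g u\<bar> \<le> 1" for u by (simp add: g_def abs_tauE_le)
  have w_eq: "heat_w s P E z t = convol P g (a *\<^sub>R z)" for z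
    unfolding g_def a_def by (rule heat_w_rescaled[OF \<open>0 < s\<close> \<open>0 < t\<close>])
  have dw: "((\<lambda>z. heat_w s P E z t) has_derivative (\<lambda>v. F z \<bullet> v)) (at z)" for z
  proof -
    have "((\<lambda>z. a *\<^sub>R z) has_derivative (\<lambda>v. a *\<^sub>R v)) (at z)" by (auto intro!: derivative_eq_intros)
    from has_derivative_compose[OF this has_derivative_convol_profile[OF g_meas g_bound]]
    show ?thesis
      by (simp add: w_eq F_def o_def)
  qed
  have cF: "continuous_on (ball 0 (1 / a)) F"
    unfolding F_def
    by (intro continuous_at_imp_continuous_on ballI continuous_intros isCont_o2[OF _ isCont_convol_grad_profile[OF g_meas g_bound]])
  have pos: "c * a \<le> snd (F z)" if "z \<in> ball 0 (1 / a)" for z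
  proof -
    have "norm (a *\<^sub>R z) < 1" using that a by (simp add: field_simps)
    then have "c \<le> snd (convol_grad DP g (a *\<^sub>R z))"
      using lower unfolding g_def[abs_def] a_def by simp
    then show ?thesis using a by (simp add: F_def mult.commute)
  qed
  have "0 < c * a" using \<open>0 < c\<close> a by simp
  show ?thesis
  proof (intro conjI ballI)
    fix z :: "(real^'m) \<times> real" assume "z \<in> ball 0 (t powr (1 / (2 * s)))"
    then have z: "z \<in> ball 0 (1 / a)" by (simp add: radius)
    have "((\<lambda>h. heat_w s P E (z + (0, h)) t) has_real_derivative snd (F z)) (at 0)"
      using has_real_derivative_vertical[of "\<lambda>z. heat_w s P E z t" "F z" z 0] dw[of z]
      by (simp add: zero_prod_def[symmetric])
    then show "\<exists>D. ((\<lambda>h. heat_w s P E (z + (0, h)) t) has_real_derivative D) (at 0) \<and>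
        D \<ge> c * t powr (- 1 / (2 * s))"
      using pos[OF z] by (auto simp: a_def)
  next
    have "C1_graph_set ({z. heat_w s P E z t = 0} \<inter> ball 0 (1 / a))"
      using pos \<open>0 < c * a\<close> by (intro C1_graph_set_zero_set[OF open_ball convex_ball dw cF]) fastforce
    then show "C1_graph_set ({z. heat_w s P E z t = 0} \<inter> ball 0 (t powr (1 / (2 * s))))"
      by (simp add: radius)
  qed
qed

theorem lemma2p1:
  fixes E :: "((real^'m::finite) \<times> real) set" and P :: "(real^'m::finite) \<times> real \<Rightarrow> real"
    and \<gamma> :: "(real^'m::finite) \<Rightarrow> real" and s \<beta> r C\<gamma> Cc CNs :: real
  assumes "0 < s" "s < 1" "0 < \<beta>" "\<beta> \<le> 1"
    and "kernel_profile s P Cc CNs"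
    and "open E" "C1beta_boundary \<beta> E" "0 \<in> frontier E"
    and "r > 0"
    and "E \<inter> cyl r = {(y', yN). (y', yN) \<in> cyl r \<and> yN > \<gamma> y'}"
    and "C1beta_ball r \<beta> \<gamma>"
    and "\<forall>y'\<in>ball 0 r. \<bar>\<gamma> y'\<bar> \<le> C\<gamma> * norm y' powr (1 + \<beta>)"
  shows "\<exists>t0>0. \<exists>C>0. \<forall>t. 0 < t \<and> t < t0 \<longrightarrow>
           (\<forall>z\<in>ball 0 (t powr (1/(2 * s))).
              \<exists>D. ((\<lambda>h. heat_w s P E (z + (0, h)) t) has_real_derivative D) (at 0) \<and>
                  D \<ge> C * t powr (-1/(2 * s))) \<and>
           C1_graph_set ({z. heat_w s P E z t = 0} \<inter> ball 0 (t powr (1/(2 * s))))"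
proof -
  let ?N = "real (CARD('m) + 1)"
  from assms(5) obtain DP where dP: "\<forall>y. (P has_derivative (\<lambda>h. DP y \<bullet> h)) (at y)"
    and "continuous_on UNIV DP" and DP_bound: "\<forall>y. norm (DP y) \<le> Cc / (1 + norm y powr (?N + 2 * s + 1))"
    and P_bounds: "\<forall>y. (1 / Cc) / (1 + norm y powr (?N + 2 * s)) \<le> P y \<and> P y \<le> Cc / (1 + norm y powr (?N + 2 * s))"
    and "Cc > 0"
    unfolding kernel_profile_def by blast
  then have profile: "decaying_profile P DP Cc (?N + 2 * s) (?N + 2 * s + 1)"
    using assms(1) by unfold_locales (use dP DP_bound P_bounds in \<open>simp_all del: split_paired_All\<close>)
  have "continuous_on (ball 0 r) \<gamma>"
    using assms(11) unfolding C1beta_ball_def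
    by (meson continuous_at_imp_continuous_on has_derivative_continuous)
  then obtain c where c: "c > 0"
    and "\<forall>\<^sub>F a in at_top. \<forall>x\<in>ball 0 1. c \<le> snd (convol_grad DP (\<lambda>u. tauE E (u /\<^sub>R a)) x)"
    using blowup_gradient_lower_bound[OF profile assms(6,10) _ assms(12,9,3)] by blast
  from eventually_at_top_time_rescaled[OF assms(1) this(2)]
  obtain t0 where "t0 > 0" and "\<And>t. 0 < t \<Longrightarrow> t < t0 \<Longrightarrow>
      \<forall>x\<in>ball 0 1. c \<le> snd (convol_grad DP (\<lambda>u. tauE E (u /\<^sub>R t powr (- 1 / (2 * s)))) x)"
    by blast
  then show ?thesis
    using heat_w_time_slice[OF profile assms(6,1) _ c] by (intro exI[of _ t0] exI[of _ c] conjI allI impI c) auto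
qed

end
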